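(* Let $0<\theta<\lambda$ and $p\in(0,1)$. For each $N\geq 1$ let $\{\eta_t\}_{t\geq 0}$ be the bias voter model on $\mathbb{T}^N$ with parameters $\lambda,\theta$ and initial distribution $\mu_p$, and let $P^p_{\mathbb{T}^N}$ denote its law. Then for every $t>0$ and every vertex $x$, \[ \lim_{N\to\infty}P^p_{\mathbb{T}^N}(\eta_t(x)=1)=\frac{p e^{(\lambda-\theta)t}}{1-p+p e^{(\lambda-\theta)t}}. \]
   Context: $\mathbb{T}^N$ denotes the infinite regular tree in which every vertex has degree $N+1$. For a connected graph $S$ with finite degrees and constants $\lambda>\theta>0$, the bias voter model on $S$ is the spin system $\{\eta_t\}_{t\ge0}$ on $\{0,1\}^S$ in which the configuration $\eta$ flips at vertex $x$ at rate \[ c(x,\eta)=\begin{cases}\frac{\lambda}{\deg(x)}\sum_{y\sim x}\eta(y) & \text{if } \eta(x)=0,\\ \frac{\theta}{\deg(x)}\sum_{y\sim x}(1-\eta(y)) & \text{if } \eta(x)=1,\end{cases} \] where $y\sim x$ means $y$ is a neighbor of $x$. (Equivalently: a vertex in state $0$, resp. $1$, at rate $\lambda$, resp. $\theta$, picks a uniformly random neighbor and copies its state.) $\mu_p$ denotes the product Bernoulli measure with density $p$ on $\{0,1\}^S$, i.e. $\mu_p(\eta(x)=1\ \forall x\in A)=p^{|A|}$ for finite $A\subseteq S$. *)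

theory Defs
  imports "HOL-Probability.Probability"
begin

text \<open>Vertices of the regular tree T^N (every vertex of degree N+1), encoded as lists of
naturals: the root is [], its N+1 children are [a] with a \<le> N, and every other vertex
xs has the N children xs @ [a] with a < N (and parent butlast xs).\<close>

definition tree_vertices :: "nat \<Rightarrow> nat list set" where
  "tree_vertices N = {xs. (xs \<noteq> [] \<longrightarrow> hd xs \<le> N) \<and> (\<forall>i\<in>{1..<length xs}. xs ! i < N)}"

definition tree_neighbors :: "nat \<Rightarrow> nat list \<Rightarrow> nat list set" where
  "tree_neighbors N x =
     (if x = [] then {} else {butlast x}) \<union> {x @ [a] | a. x @ [a] \<in> tree_vertices N}"

definition config_space :: "nat \<Rightarrow> (nat list \<Rightarrow> bool) measure" where
  "config_space N = PiM (tree_vertices N) (\<lambda>_. count_space UNIV)"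

definition mu_p :: "nat \<Rightarrow> real \<Rightarrow> (nat list \<Rightarrow> bool) measure" where
  "mu_p N p = PiM (tree_vertices N) (\<lambda>_. measure_pmf (bernoulli_pmf p))"

definition bvm_rate :: "nat \<Rightarrow> real \<Rightarrow> real \<Rightarrow> nat list \<Rightarrow> (nat list \<Rightarrow> bool) \<Rightarrow> real" where
  "bvm_rate N lam th x \<eta> =
     (if \<eta> x then th / real (N + 1) * real (card {y \<in> tree_neighbors N x. \<not> \<eta> y})
      else lam / real (N + 1) * real (card {y \<in> tree_neighbors N x. \<eta> y}))"

definition cylinder_fun :: "nat \<Rightarrow> nat list set \<Rightarrow> ((nat list \<Rightarrow> bool) \<Rightarrow> real) \<Rightarrow> bool" where
  "cylinder_fun N A f \<longleftrightarrow> finite A \<and> A \<subseteq> tree_vertices N \<and>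
     (\<forall>\<eta> \<xi>. (\<forall>y\<in>A. \<eta> y = \<xi> y) \<longrightarrow> f \<eta> = f \<xi>)"

text \<open>Generator of the spin system applied to a cylinder function depending on A:
  Lf(eta) = sum_x c(x,eta) (f(eta^x) - f(eta)); only x in A contribute.\<close>

definition bvm_gen :: "nat \<Rightarrow> real \<Rightarrow> real \<Rightarrow> nat list set \<Rightarrow> ((nat list \<Rightarrow> bool) \<Rightarrow> real)
    \<Rightarrow> (nat list \<Rightarrow> bool) \<Rightarrow> real" where
  "bvm_gen N lam th A f \<eta> = (\<Sum>x\<in>A. bvm_rate N lam th x \<eta> * (f (\<eta>(x := \<not> \<eta> x)) - f \<eta>))"

text \<open>nu t is the distribution at time t of the bias voter model on T^N started from mu_p,
characterised by the Kolmogorov forward equation d/dt nu_t(f) = nu_t(Lf) for all cylinder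
functions f (which determines the one-time marginals uniquely, as the rates are bounded).\<close>

definition bvm_marginals :: "nat \<Rightarrow> real \<Rightarrow> real \<Rightarrow> real \<Rightarrow> (real \<Rightarrow> (nat list \<Rightarrow> bool) measure) \<Rightarrow> bool" where
  "bvm_marginals N lam th p \<nu> \<longleftrightarrow>
     (\<forall>t\<ge>0. prob_space (\<nu> t) \<and> sets (\<nu> t) = sets (config_space N)) \<and>
     \<nu> 0 = mu_p N p \<and>
     (\<forall>A f. cylinder_fun N A f \<longrightarrow>
        (\<forall>t\<ge>0. ((\<lambda>s. integral\<^sup>L (\<nu> s) f) has_real_derivative
                   integral\<^sup>L (\<nu> t) (bvm_gen N lam th A f)) (at t within {0..})))"

end

theory Submission
  imports Defs
begin

(* Let L be the logistic solution of L' = (lam - th) L (1 - L), L 0 = p, and let g N B t be the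
   deviation of the correlation E[prod_{z in B} eta_t(z)] from its mean-field value L(t)^|B|.
   The forward equation, applied to these spin products, writes the derivative of a |B|-point
   correlation as an average over the pairs (x, y) with x in B and y a neighbour of x of
   correlations of at most |B| + 1 sites. With the mean-field values inserted, the pair term
   vanishes unless y already lies in B, which happens for at most |B|^2 of the |B|(N+1) pairs.
   Hence |g' B| <= a |B| (max {|g B'| : |B'| <= |B| + 1} + |B| / (N+1)) and g B 0 = 0.
   Iterating this hierarchy to a finite depth over a time step h with a h <= 1/4, with the trivial
   bound |g| <= 1 at the bottom, shows that all deviations on bounded sets tend to 0 as N grows,
   one time step after another. *)

section \<open>Hierarchies of differential inequalities\<close>

lemma abs_diff_le_by_derivative_bound:
  fixes G F :: "real \<Rightarrow> real"
  assumes "a \<le> b"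
    and G: "\<And>s. a \<le> s \<Longrightarrow> s \<le> b \<Longrightarrow> (G has_real_derivative G' s) (at s within {a..})"
    and F: "\<And>s. a \<le> s \<Longrightarrow> s \<le> b \<Longrightarrow> (F has_real_derivative F' s) (at s within {a..})"
    and bound: "\<And>s. a < s \<Longrightarrow> s < b \<Longrightarrow> \<bar>G' s\<bar> \<le> F' s"
  shows "\<bar>G b - G a\<bar> \<le> F b - F a"
proof (cases "a = b")
  case False
  have continuous: "continuous_on {a..b} H"
    if "\<And>s. a \<le> s \<Longrightarrow> s \<le> b \<Longrightarrow> (H has_real_derivative H' s) (at s within {a..})" for H H'
    by (rule DERIV_continuous_on, rule DERIV_subset[OF that]) auto
  have interior: "(H has_vector_derivative H' s) (at s)"
    if "\<And>s. a \<le> s \<Longrightarrow> s \<le> b \<Longrightarrow> (H has_real_derivative H' s) (at s within {a..})" "a < s" "s < b"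
    for H H' s
  proof -
    have "at s within {a..} = at s"
      using \<open>a < s\<close> by (intro at_within_interior) simp
    then show ?thesis
      using that(1)[of s] that(2,3)
      by (simp add: has_real_derivative_iff_has_vector_derivative[symmetric])
  qed
  show ?thesis
    using \<open>a \<le> b\<close> False bound
    by (intro differentiable_bound_general[where f' = G' and \<phi>' = F', simplified]
        continuous[OF G] continuous[OF F] interior[OF G] interior[OF F]) auto
qed simp

(* Iterating the derivative bound of the locale below n times over a time span h, starting from
   deviations at most gamma on sets of size k + n, amplifies gamma by at most init_gain, while the
   trivial bound 1 at depth k + n contributes trunc_remainder: the n-th term of the binomial series
   of (1 - a h)^(-k). *)

definition trunc_remainder :: "real \<Rightarrow> nat \<Rightarrow> nat \<Rightarrow> real \<Rightarrow> real" where
  "trunc_remainder a n k h = pochhammer (real k) n * (a * h) ^ n / fact n"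

fun init_gain :: "real \<Rightarrow> real \<Rightarrow> nat \<Rightarrow> nat \<Rightarrow> real" where
  "init_gain a \<tau> 0 k = 0"
| "init_gain a \<tau> (Suc n) k = 1 + \<tau> * real k * a * (init_gain a \<tau> n (k + 1) + 1)"

lemma init_gain_nonneg: "0 \<le> a \<Longrightarrow> 0 \<le> \<tau> \<Longrightarrow> 0 \<le> init_gain a \<tau> n k"
  by (induction n arbitrary: k) auto

lemma trunc_remainder_nonneg: "0 \<le> a \<Longrightarrow> 0 \<le> h \<Longrightarrow> 0 \<le> trunc_remainder a n k h"
  unfolding trunc_remainder_def pochhammer_prod by (intro divide_nonneg_nonneg mult_nonneg_nonneg prod_nonneg) auto

lemma trunc_remainder_Suc_has_derivative:
  "((\<lambda>r. trunc_remainder a (Suc n) k (r - r0)) has_real_derivative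
     real k * a * trunc_remainder a n (k + 1) (r - r0)) (at r within S)"
proof -
  have "((\<lambda>r. (a * (r - r0)) ^ Suc n) has_real_derivative (1 + real n) * (a * (a * (r - r0)) ^ n))
      (at r within S)"
    by (rule DERIV_power_Suc) (auto intro!: derivative_eq_intros)
  from DERIV_cdivide[OF DERIV_cmult[OF this, of "pochhammer (real k) (Suc n)"], of "fact (Suc n)"]
  have "((\<lambda>r. trunc_remainder a (Suc n) k (r - r0)) has_real_derivative
      pochhammer (real k) (Suc n) * ((1 + real n) * (a * (a * (r - r0)) ^ n)) / fact (Suc n))
      (at r within S)"
    unfolding trunc_remainder_def by simp
  also have "pochhammer (real k) (Suc n) * ((1 + real n) * (a * (a * (r - r0)) ^ n)) / fact (Suc n)
      = real k * a * trunc_remainder a n (k + 1) (r - r0)"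
    unfolding trunc_remainder_def pochhammer_rec
    by (simp add: field_simps del: of_nat_Suc) (simp add: algebra_simps)
  finally show ?thesis .
qed

lemma trunc_remainder_tendsto_zero:
  assumes "0 \<le> a" "0 \<le> h" "a * h \<le> 1 / 4"
  shows "(\<lambda>n. trunc_remainder a n k h) \<longlonglongrightarrow> 0"
proof -
  have "summable (\<lambda>n. trunc_remainder a n k h)"
  proof (rule summable_ratio_test[of "1/2" k])
    fix n assume "k \<le> n"
    have ratio: "trunc_remainder a (Suc n) k h
        = trunc_remainder a n k h * ((real k + real n) * (a * h) / (real n + 1))"
      unfolding trunc_remainder_def pochhammer_rec' by (simp add: field_simps)
    have "(real k + real n) * (a * h) \<le> (2 * (real n + 1)) * (1 / 4)"
      using \<open>k \<le> n\<close> assms by (intro mult_mono) (auto simp: zero_le_mult_iff)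
    then have "(real k + real n) * (a * h) / (real n + 1) \<le> 1 / 2"
      by (simp add: field_simps)
    then have "trunc_remainder a (Suc n) k h \<le> trunc_remainder a n k h * (1 / 2)"
      unfolding ratio using trunc_remainder_nonneg[OF assms(1,2)] by (intro mult_left_mono) auto
    then show "norm (trunc_remainder a (Suc n) k h) \<le> 1 / 2 * norm (trunc_remainder a n k h)"
      using trunc_remainder_nonneg[OF assms(1,2)] by simp
  qed simp
  then show ?thesis by (rule summable_LIMSEQ_zero)
qed

locale correlation_hierarchy =
  fixes a e :: real and Bs :: "'b set set" and g g' :: "'b set \<Rightarrow> real \<Rightarrow> real"
  assumes a_nonneg: "0 \<le> a" and e_nonneg: "0 \<le> e"
    and bounded: "\<And>B t. B \<in> Bs \<Longrightarrow> 0 \<le> t \<Longrightarrow> \<bar>g B t\<bar> \<le> 1"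
    and has_deriv: "\<And>B t. B \<in> Bs \<Longrightarrow> 0 \<le> t \<Longrightarrow> (g B has_real_derivative g' B t) (at t within {0..})"
    and deriv_bound: "\<And>B t M. B \<in> Bs \<Longrightarrow> 0 \<le> t \<Longrightarrow>
      (\<And>B'. B' \<in> Bs \<Longrightarrow> card B' \<le> card B + 1 \<Longrightarrow> \<bar>g B' t\<bar> \<le> M) \<Longrightarrow>
      \<bar>g' B t\<bar> \<le> real (card B) * a * (M + e * real (card B))"
begin

lemma truncated_iteration_bound:
  assumes "0 \<le> \<tau>" "0 \<le> s0" "0 \<le> \<gamma>"
    and init: "\<And>B. B \<in> Bs \<Longrightarrow> card B \<le> K \<Longrightarrow> \<bar>g B s0\<bar> \<le> \<gamma>"
    and "e * real K \<le> \<gamma>"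
  shows "k + n \<le> K \<Longrightarrow> B \<in> Bs \<Longrightarrow> card B \<le> k \<Longrightarrow> s0 \<le> s \<Longrightarrow> s \<le> s0 + \<tau> \<Longrightarrow>
    \<bar>g B s\<bar> \<le> \<gamma> * init_gain a \<tau> n k + trunc_remainder a n k (s - s0)"
proof (induction n arbitrary: k B s)
  case 0
  then show ?case using bounded[of B s] \<open>0 \<le> s0\<close> by (simp add: trunc_remainder_def)
next
  case (Suc n k B s)
  define C where "C = init_gain a \<tau> n (k + 1)"
  have "0 \<le> C" unfolding C_def using init_gain_nonneg a_nonneg \<open>0 \<le> \<tau>\<close> by simp
  have IH: "\<bar>g B' r\<bar> \<le> \<gamma> * C + trunc_remainder a n (k + 1) (r - s0)"
    if "B' \<in> Bs" "card B' \<le> k + 1" "s0 \<le> r" "r \<le> s0 + \<tau>" for B' r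
    using Suc.IH[of "k + 1" B' r] Suc.prems(1) that by (simp add: C_def)
  define c where "c = real k * a * (\<gamma> * C + e * real k)"
  define F where "F r = (r - s0) * c + trunc_remainder a (Suc n) k (r - s0)" for r
  have F_deriv: "(F has_real_derivative c + real k * a * trunc_remainder a n (k + 1) (r - s0))
      (at r within {s0..})" for r
    unfolding F_def by (auto intro!: derivative_eq_intros trunc_remainder_Suc_has_derivative)
  have g_deriv: "(g B has_real_derivative g' B r) (at r within {s0..})" if "s0 \<le> r" for r
    using has_deriv[of B r] Suc.prems(2) \<open>0 \<le> s0\<close> that by (auto intro: DERIV_subset)
  have g'_bound: "\<bar>g' B r\<bar> \<le> c + real k * a * trunc_remainder a n (k + 1) (r - s0)"
    if r: "s0 < r" "r < s" for r
  proof -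
    define M where "M = \<gamma> * C + trunc_remainder a n (k + 1) (r - s0)"
    have "0 \<le> M"
      unfolding M_def using \<open>0 \<le> \<gamma>\<close> \<open>0 \<le> C\<close> trunc_remainder_nonneg a_nonneg r by simp
    have M_bound: "\<bar>g B' r\<bar> \<le> M" if "B' \<in> Bs" "card B' \<le> card B + 1" for B'
      unfolding M_def using IH[of B' r] that Suc.prems(3,4,5) r by simp
    have "\<bar>g' B r\<bar> \<le> real (card B) * a * (M + e * real (card B))"
      using Suc.prems(2) \<open>0 \<le> s0\<close> r M_bound by (intro deriv_bound) auto
    also have "\<dots> \<le> real k * a * (M + e * real k)"
      using Suc.prems(3) a_nonneg e_nonneg \<open>0 \<le> M\<close>
      by (intro mult_mono add_mono order_refl) auto
    finally show ?thesis unfolding c_def M_def by (simp add: algebra_simps)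
  qed
  have "\<bar>g B s - g B s0\<bar> \<le> F s - F s0"
    using Suc.prems(4) g_deriv F_deriv g'_bound
    by (intro abs_diff_le_by_derivative_bound[where G' = "g' B"]) auto
  moreover have "F s0 = 0"
    unfolding F_def trunc_remainder_def by simp
  moreover have "\<bar>g B s0\<bar> \<le> \<gamma>"
    using init Suc.prems(1-3) by simp
  moreover have "e * real k \<le> \<gamma>"
    using \<open>e * real K \<le> \<gamma>\<close> e_nonneg Suc.prems(1) by (meson mult_left_mono of_nat_mono order_trans add_leE)
  then have "(s - s0) * c \<le> \<tau> * (real k * a * (\<gamma> * C + \<gamma>))"
    unfolding c_def using Suc.prems(4,5) a_nonneg \<open>0 \<le> \<gamma>\<close> \<open>0 \<le> C\<close> e_nonneg
    by (intro mult_mono mult_left_mono add_mono) auto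
  ultimately show ?case
    unfolding F_def C_def by (simp add: algebra_simps)
qed

end

definition uniformly_vanishing :: "(nat \<Rightarrow> 'b set \<Rightarrow> real) \<Rightarrow> (nat \<Rightarrow> 'b set set) \<Rightarrow> bool" where
  "uniformly_vanishing f Bs \<longleftrightarrow>
     (\<forall>k \<epsilon>. 0 < \<epsilon> \<longrightarrow> (\<forall>\<^sub>F N in sequentially. \<forall>B\<in>Bs N. card B \<le> k \<longrightarrow> \<bar>f N B\<bar> \<le> \<epsilon>))"

lemma uniformly_vanishing_imp_tendsto:
  assumes "uniformly_vanishing f Bs" and "\<forall>\<^sub>F N in sequentially. B \<in> Bs N"
  shows "(\<lambda>N. f N B) \<longlonglongrightarrow> 0"
proof (rule tendstoI)
  fix \<epsilon> :: real assume "0 < \<epsilon>"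
  then have "0 < \<epsilon> / 2" by simp
  then have "\<forall>\<^sub>F N in sequentially. \<forall>B'\<in>Bs N. card B' \<le> card B \<longrightarrow> \<bar>f N B'\<bar> \<le> \<epsilon> / 2"
    using assms(1) unfolding uniformly_vanishing_def by blast
  with assms(2) show "\<forall>\<^sub>F N in sequentially. dist (f N B) 0 < \<epsilon>"
    by eventually_elim (use \<open>0 < \<epsilon>\<close> in auto)
qed

lemma uniformly_vanishing_step:
  assumes hier: "\<forall>\<^sub>F N in sequentially. correlation_hierarchy a (e N) (Bs N) (g N) (g' N)"
    and "0 \<le> a" and "e \<longlonglongrightarrow> 0"
    and vanish: "uniformly_vanishing (\<lambda>N B. g N B s0) Bs"
    and "0 \<le> s0" "s0 \<le> s" "a * (s - s0) \<le> 1 / 4"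
  shows "uniformly_vanishing (\<lambda>N B. g N B s) Bs"
  unfolding uniformly_vanishing_def
proof (intro allI impI)
  fix k :: nat and \<epsilon> :: real assume "0 < \<epsilon>"
  have "\<forall>\<^sub>F n in sequentially. trunc_remainder a n k (s - s0) < \<epsilon> / 2"
    using trunc_remainder_tendsto_zero[of a "s - s0" k] assms(2,6,7) \<open>0 < \<epsilon>\<close>
    by (intro order_tendstoD(2)) auto
  then obtain n where n: "trunc_remainder a n k (s - s0) < \<epsilon> / 2"
    by (auto simp: eventually_sequentially)
  define C where "C = init_gain a (s - s0) n k"
  have "0 \<le> C"
    unfolding C_def using init_gain_nonneg \<open>0 \<le> a\<close> \<open>s0 \<le> s\<close> by simp
  define \<gamma> where "\<gamma> = \<epsilon> / (2 * (C + 1))"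
  have "0 < \<gamma>"
    unfolding \<gamma>_def using \<open>0 < \<epsilon>\<close> \<open>0 \<le> C\<close> by simp
  have "\<gamma> * C \<le> \<epsilon> / 2"
    unfolding \<gamma>_def using \<open>0 < \<epsilon>\<close> \<open>0 \<le> C\<close> by (simp add: field_simps)
  have "\<forall>\<^sub>F N in sequentially. \<forall>B\<in>Bs N. card B \<le> k + n \<longrightarrow> \<bar>g N B s0\<bar> \<le> \<gamma>"
    using vanish \<open>0 < \<gamma>\<close> unfolding uniformly_vanishing_def by blast
  moreover have "\<forall>\<^sub>F N in sequentially. e N < \<gamma> / (real (k + n) + 1)"
    using \<open>e \<longlonglongrightarrow> 0\<close> \<open>0 < \<gamma>\<close> by (intro order_tendstoD(2)) auto
  ultimately show "\<forall>\<^sub>F N in sequentially. \<forall>B\<in>Bs N. card B \<le> k \<longrightarrow> \<bar>g N B s\<bar> \<le> \<epsilon>"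
    using hier
  proof eventually_elim
    case (elim N)
    interpret correlation_hierarchy a "e N" "Bs N" "g N" "g' N"
      by (rule elim(3))
    have "e N * real (k + n) \<le> \<gamma> / (real (k + n) + 1) * real (k + n)"
      using elim(2) e_nonneg by (intro mult_right_mono) auto
    also have "\<dots> \<le> \<gamma>"
      using \<open>0 < \<gamma>\<close> by (simp add: field_simps)
    finally have "e N * real (k + n) \<le> \<gamma>" .
    show ?case
    proof (intro ballI impI)
      fix B assume "B \<in> Bs N" "card B \<le> k"
      have "\<bar>g N B s\<bar> \<le> \<gamma> * C + trunc_remainder a n k (s - s0)"
        unfolding C_def
        using \<open>0 \<le> s0\<close> \<open>s0 \<le> s\<close> \<open>0 < \<gamma>\<close> elim(1) \<open>e N * real (k + n) \<le> \<gamma>\<close> \<open>B \<in> Bs N\<close> \<open>card B \<le> k\<close>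
        by (intro truncated_iteration_bound) auto
      also have "\<dots> \<le> \<epsilon>"
        using \<open>\<gamma> * C \<le> \<epsilon> / 2\<close> n by simp
      finally show "\<bar>g N B s\<bar> \<le> \<epsilon>" .
    qed
  qed
qed

lemma correlation_hierarchy_vanishes:
  assumes hier: "\<forall>\<^sub>F N in sequentially. correlation_hierarchy a (e N) (Bs N) (g N) (g' N)"
    and "0 \<le> a" and "e \<longlonglongrightarrow> 0"
    and init: "\<forall>\<^sub>F N in sequentially. \<forall>B\<in>Bs N. g N B 0 = 0"
    and "0 \<le> t"
  shows "uniformly_vanishing (\<lambda>N B. g N B t) Bs"
proof -
  define \<tau> where "\<tau> = 1 / (4 * a + 1)"
  have "0 < \<tau>" "a * \<tau> \<le> 1 / 4"
    using \<open>0 \<le> a\<close> by (auto simp: \<tau>_def field_simps)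
  have "uniformly_vanishing (\<lambda>N B. g N B s) Bs" if "0 \<le> s" "s \<le> real m * \<tau>" for m s
    using that
  proof (induction m arbitrary: s)
    case 0
    then have "s = 0" by simp
    with init show ?case
      unfolding uniformly_vanishing_def by (auto elim: eventually_mono)
  next
    case (Suc m)
    show ?case
    proof (cases "s \<le> real m * \<tau>")
      case True
      then show ?thesis using Suc by blast
    next
      case False
      have "a * (s - real m * \<tau>) \<le> a * \<tau>"
        using Suc.prems \<open>0 \<le> a\<close> by (intro mult_left_mono) (auto simp: algebra_simps)
      then have "a * (s - real m * \<tau>) \<le> 1 / 4"
        using \<open>a * \<tau> \<le> 1 / 4\<close> by linarith
      with False Suc.prems \<open>0 < \<tau>\<close> show ?thesis
        by (intro uniformly_vanishing_step[OF hier \<open>0 \<le> a\<close> \<open>e \<longlonglongrightarrow> 0\<close> Suc.IH, of "real m * \<tau>"]) auto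
    qed
  qed
  moreover have "t \<le> real (nat \<lceil>t / \<tau>\<rceil>) * \<tau>"
    using real_nat_ceiling_ge[of "t / \<tau>"] \<open>0 < \<tau>\<close> by (simp add: field_simps)
  ultimately show ?thesis
    using \<open>0 \<le> t\<close> by blast
qed

section \<open>The regular tree\<close>

lemma snoc_in_tree_vertices_iff:
  assumes "x \<in> tree_vertices N" "x \<noteq> []"
  shows "x @ [a] \<in> tree_vertices N \<longleftrightarrow> a < N"
proof
  assume "x @ [a] \<in> tree_vertices N"
  moreover have "length x \<in> {1..<length (x @ [a])}"
    using \<open>x \<noteq> []\<close> by (cases x) auto
  ultimately have "(x @ [a]) ! length x < N"
    unfolding tree_vertices_def by blast
  then show "a < N" by simp
next
  assume "a < N"
  then show "x @ [a] \<in> tree_vertices N"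
    using assms unfolding tree_vertices_def by (auto simp: nth_append hd_append less_Suc_eq_le)
qed

lemma butlast_in_tree_vertices: "x \<in> tree_vertices N \<Longrightarrow> butlast x \<in> tree_vertices N"
  unfolding tree_vertices_def
  by (cases x rule: rev_cases) (auto simp: nth_append hd_append split: if_splits)

lemma tree_neighbors_Nil: "tree_neighbors N [] = (\<lambda>a. [a]) ` {..N}"
  unfolding tree_neighbors_def tree_vertices_def by auto

lemma tree_neighbors_non_Nil:
  assumes "x \<in> tree_vertices N" "x \<noteq> []"
  shows "tree_neighbors N x = insert (butlast x) ((\<lambda>a. x @ [a]) ` {..<N})"
  using assms snoc_in_tree_vertices_iff[OF assms] unfolding tree_neighbors_def by auto

lemma tree_neighbors_subset: "x \<in> tree_vertices N \<Longrightarrow> tree_neighbors N x \<subseteq> tree_vertices N"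
  using butlast_in_tree_vertices unfolding tree_neighbors_def by auto

lemma finite_tree_neighbors: "x \<in> tree_vertices N \<Longrightarrow> finite (tree_neighbors N x)"
  by (cases "x = []") (auto simp: tree_neighbors_Nil tree_neighbors_non_Nil)

lemma card_tree_neighbors: "x \<in> tree_vertices N \<Longrightarrow> card (tree_neighbors N x) = N + 1"
proof (cases "x = []")
  case True
  then show ?thesis by (simp add: tree_neighbors_Nil card_image inj_on_def)
next
  case False
  assume "x \<in> tree_vertices N"
  have "butlast x \<notin> (\<lambda>a. x @ [a]) ` {..<N}"
    using False by (auto dest: arg_cong[of _ _ length])
  then show ?thesis
    using \<open>x \<in> tree_vertices N\<close> False by (simp add: tree_neighbors_non_Nil card_image inj_on_def)
qed

lemma eventually_in_tree_vertices: "\<forall>\<^sub>F N in sequentially. x \<in> tree_vertices N"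
  using eventually_gt_at_top[of "sum_list x"]
proof eventually_elim
  case (elim N)
  then have bound: "z < N" if "z \<in> set x" for z
    using member_le_sum_list[OF that] by linarith
  show ?case
    unfolding tree_vertices_def using bound[OF hd_in_set] bound[OF nth_mem] by fastforce
qed

section \<open>Spin products and the generator\<close>

definition spin_prod :: "'a set \<Rightarrow> ('a \<Rightarrow> bool) \<Rightarrow> real" where
  "spin_prod C \<eta> = (\<Prod>z\<in>C. of_bool (\<eta> z))"

lemma spin_prod_insert: "finite C \<Longrightarrow> spin_prod (insert y C) \<eta> = of_bool (\<eta> y) * spin_prod C \<eta>"
  unfolding spin_prod_def by (cases "y \<in> C") (auto simp: insert_absorb prod.remove)

lemma spin_prod_remove:
  "finite C \<Longrightarrow> x \<in> C \<Longrightarrow> spin_prod C \<eta> = of_bool (\<eta> x) * spin_prod (C - {x}) \<eta>"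
  using spin_prod_insert[of "C - {x}" x \<eta>] by (simp add: insert_absorb)

lemma spin_prod_eq_of_bool: "finite C \<Longrightarrow> spin_prod C \<eta> = of_bool (\<forall>z\<in>C. \<eta> z)"
  unfolding spin_prod_def by (induction C rule: finite_induct) auto

lemma spin_prod_bounds: "0 \<le> spin_prod C \<eta>" "spin_prod C \<eta> \<le> 1"
  unfolding spin_prod_def by (auto intro: prod_nonneg prod_le_1)

lemma abs_spin_prod_le_1: "\<bar>spin_prod C \<eta>\<bar> \<le> 1"
  using spin_prod_bounds[of C \<eta>] by simp

lemma cylinder_fun_spin_prod: "finite C \<Longrightarrow> C \<subseteq> tree_vertices N \<Longrightarrow> cylinder_fun N C (spin_prod C)"
  unfolding cylinder_fun_def spin_prod_def by auto

lemma measurable_spin: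
  assumes "sets M = sets (config_space N)" "x \<in> tree_vertices N"
  shows "(\<lambda>\<eta>. \<eta> x) \<in> measurable M (count_space UNIV)"
  unfolding measurable_cong_sets[OF assms(1) refl] config_space_def
  using assms(2) by (rule measurable_component_singleton)

lemma borel_measurable_spin_prod:
  assumes "sets M = sets (config_space N)" "C \<subseteq> tree_vertices N"
  shows "spin_prod C \<in> borel_measurable M"
  unfolding spin_prod_def
  using measurable_compose[OF measurable_spin[OF assms(1)], of _ "\<lambda>b. of_bool b :: real" borel] assms(2)
  by (intro borel_measurable_prod) auto

lemma integrable_spin_prod:
  assumes "prob_space M" "sets M = sets (config_space N)" "C \<subseteq> tree_vertices N"
  shows "integrable M (spin_prod C)"
proof -
  interpret prob_space M by fact
  show ?thesis
    using borel_measurable_spin_prod[OF assms(2,3)]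
    by (intro integrable_const_bound[where B = 1]) (auto simp: abs_spin_prod_le_1)
qed

lemma integral_spin_prod_bounds:
  assumes "prob_space M" "sets M = sets (config_space N)" "C \<subseteq> tree_vertices N"
  shows "0 \<le> (\<integral>\<eta>. spin_prod C \<eta> \<partial>M)" "(\<integral>\<eta>. spin_prod C \<eta> \<partial>M) \<le> 1"
proof -
  interpret prob_space M by fact
  show "0 \<le> (\<integral>\<eta>. spin_prod C \<eta> \<partial>M)"
    by (intro integral_nonneg_AE) (auto simp: spin_prod_bounds)
  have "(\<integral>\<eta>. spin_prod C \<eta> \<partial>M) \<le> (\<integral>\<eta>. 1 \<partial>M)"
    by (intro integral_mono integrable_spin_prod[OF assms]) (auto simp: spin_prod_bounds)
  then show "(\<integral>\<eta>. spin_prod C \<eta> \<partial>M) \<le> 1" by (simp add: prob_space)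
qed

lemma measure_spin_eq_integral_spin_prod:
  assumes "sets M = sets (config_space N)" "x \<in> tree_vertices N"
  shows "measure M {\<eta> \<in> space M. \<eta> x = True} = (\<integral>\<eta>. spin_prod {x} \<eta> \<partial>M)"
proof -
  let ?A = "{\<eta> \<in> space M. \<eta> x = True}"
  have "?A = (\<lambda>\<eta>. \<eta> x) -` {True} \<inter> space M" by auto
  then have "?A \<in> sets M"
    using measurable_sets[OF measurable_spin[OF assms], of "{True}"] by simp
  have "(\<integral>\<eta>. spin_prod {x} \<eta> \<partial>M) = (\<integral>\<eta>. indicator ?A \<eta> \<partial>M)"
    by (intro Bochner_Integration.integral_cong) (auto simp: spin_prod_def indicator_def)
  also have "\<dots> = measure M ?A"
    using \<open>?A \<in> sets M\<close> by simp
  finally show ?thesis ..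
qed

lemma integral_spin_prod_mu_p:
  assumes "0 \<le> p" "p \<le> 1" and B: "finite B" "B \<subseteq> tree_vertices N"
  shows "(\<integral>\<eta>. spin_prod B \<eta> \<partial>mu_p N p) = p ^ card B"
proof -
  let ?M = "\<lambda>_::nat list. measure_pmf (bernoulli_pmf p)"
  let ?S = "prod_emb (tree_vertices N) ?M B (\<Pi>\<^sub>E z\<in>B. {True})"
  have "?S \<in> sets (mu_p N p)"
    unfolding mu_p_def using B by (intro sets_PiM_I) auto
  have "spin_prod B \<eta> = indicator ?S \<eta>" if "\<eta> \<in> space (mu_p N p)" for \<eta>
    using that B unfolding mu_p_def spin_prod_eq_of_bool[OF B(1)]
    by (auto simp: prod_emb_def space_PiM PiE_iff indicator_def) (metis restrict_apply')
  then have "(\<integral>\<eta>. spin_prod B \<eta> \<partial>mu_p N p) = measure (mu_p N p) ?S"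
    using \<open>?S \<in> sets (mu_p N p)\<close> by (simp cong: Bochner_Integration.integral_cong)
  have "emeasure (mu_p N p) ?S = (\<Prod>z\<in>B. emeasure (?M z) {True})"
    unfolding mu_p_def using B by (intro emeasure_PiM_emb) (auto simp: prob_space_measure_pmf)
  also have "\<dots> = ennreal (p ^ card B)"
    using assms by (simp add: emeasure_pmf_single ennreal_power)
  finally have "measure (mu_p N p) ?S = p ^ card B"
    using assms by (simp add: measure_def)
  with \<open>(\<integral>\<eta>. spin_prod B \<eta> \<partial>mu_p N p) = measure (mu_p N p) ?S\<close> show ?thesis
    by simp
qed

lemma bvm_rate_flip_spin_prod:
  assumes B: "finite B" "x \<in> B" and x: "x \<in> tree_vertices N"
  shows "bvm_rate N lam th x \<eta> * (spin_prod B (\<eta>(x := \<not> \<eta> x)) - spin_prod B \<eta>) =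
    (\<Sum>y\<in>tree_neighbors N x. (lam * (spin_prod (insert y (B - {x})) \<eta> - spin_prod (insert y B) \<eta>)
       - th * (spin_prod B \<eta> - spin_prod (insert y B) \<eta>)) / real (N + 1))"
proof -
  let ?S = "tree_neighbors N x"
  define R where "R = spin_prod (B - {x}) \<eta>"
  have B_eq: "spin_prod B \<zeta> = of_bool (\<zeta> x) * spin_prod (B - {x}) \<eta>" if "\<forall>z\<in>B - {x}. \<zeta> z = \<eta> z" for \<zeta>
    using spin_prod_remove[OF B, of \<zeta>] that unfolding spin_prod_def by simp
  have count: "real (card {y \<in> ?S. P y}) = (\<Sum>y\<in>?S. of_bool (P y))" for P
    using sum.inter_filter[OF finite_tree_neighbors[OF x], of "\<lambda>_. 1 :: real" P] by (simp add: of_bool_def)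
  show ?thesis
  proof (cases "\<eta> x")
    case True
    have "(\<Sum>y\<in>?S. (lam * (spin_prod (insert y (B - {x})) \<eta> - spin_prod (insert y B) \<eta>)
       - th * (spin_prod B \<eta> - spin_prod (insert y B) \<eta>)) / real (N + 1))
      = (\<Sum>y\<in>?S. of_bool (\<not> \<eta> y)) * (- th * R / real (N + 1))"
      unfolding sum_distrib_right
      by (intro sum.cong) (auto simp: spin_prod_insert B_eq[of \<eta>] B True R_def)
    also have "\<dots> = bvm_rate N lam th x \<eta> * (spin_prod B (\<eta>(x := \<not> \<eta> x)) - spin_prod B \<eta>)"
      unfolding bvm_rate_def count[symmetric] using True B_eq[of \<eta>] B_eq[of "\<eta>(x := False)"]
      by (simp add: R_def)
    finally show ?thesis by simp
  next
    case False
    have "(\<Sum>y\<in>?S. (lam * (spin_prod (insert y (B - {x})) \<eta> - spin_prod (insert y B) \<eta>)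
       - th * (spin_prod B \<eta> - spin_prod (insert y B) \<eta>)) / real (N + 1))
      = (\<Sum>y\<in>?S. of_bool (\<eta> y)) * (lam * R / real (N + 1))"
      unfolding sum_distrib_right
      by (intro sum.cong) (auto simp: spin_prod_insert B_eq[of \<eta>] B False R_def)
    also have "\<dots> = bvm_rate N lam th x \<eta> * (spin_prod B (\<eta>(x := \<not> \<eta> x)) - spin_prod B \<eta>)"
      unfolding bvm_rate_def count[symmetric] using False B_eq[of \<eta>] B_eq[of "\<eta>(x := True)"]
      by (simp add: R_def)
    finally show ?thesis by simp
  qed
qed

lemma integral_bvm_gen_spin_prod:
  assumes M: "prob_space M" "sets M = sets (config_space N)"
    and B: "finite B" "B \<subseteq> tree_vertices N"
  shows "(\<integral>\<eta>. bvm_gen N lam th B (spin_prod B) \<eta> \<partial>M) =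
    (\<Sum>x\<in>B. \<Sum>y\<in>tree_neighbors N x.
       (lam * ((\<integral>\<eta>. spin_prod (insert y (B - {x})) \<eta> \<partial>M) - (\<integral>\<eta>. spin_prod (insert y B) \<eta> \<partial>M))
        - th * ((\<integral>\<eta>. spin_prod B \<eta> \<partial>M) - (\<integral>\<eta>. spin_prod (insert y B) \<eta> \<partial>M))) / real (N + 1))"
proof -
  define pair where "pair x y \<eta> =
    (lam * (spin_prod (insert y (B - {x})) \<eta> - spin_prod (insert y B) \<eta>)
     - th * (spin_prod B \<eta> - spin_prod (insert y B) \<eta>)) / real (N + 1)" for x y \<eta>
  have gen: "bvm_gen N lam th B (spin_prod B) = (\<lambda>\<eta>. \<Sum>x\<in>B. \<Sum>y\<in>tree_neighbors N x. pair x y \<eta>)"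
    unfolding bvm_gen_def pair_def using B by (intro ext sum.cong refl bvm_rate_flip_spin_prod) auto
  have int: "integrable M (spin_prod C)" if "C \<subseteq> tree_vertices N" for C
    using integrable_spin_prod[OF M that] .
  have nbr: "insert y (B - {x}) \<subseteq> tree_vertices N" "insert y B \<subseteq> tree_vertices N"
    if "x \<in> B" "y \<in> tree_neighbors N x" for x y
    using that B tree_neighbors_subset[of x N] by auto
  have pair_int: "integrable M (pair x y)"
    and pair_integral: "(\<integral>\<eta>. pair x y \<eta> \<partial>M) =
      (lam * ((\<integral>\<eta>. spin_prod (insert y (B - {x})) \<eta> \<partial>M) - (\<integral>\<eta>. spin_prod (insert y B) \<eta> \<partial>M))
       - th * ((\<integral>\<eta>. spin_prod B \<eta> \<partial>M) - (\<integral>\<eta>. spin_prod (insert y B) \<eta> \<partial>M))) / real (N + 1)"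
    if "x \<in> B" "y \<in> tree_neighbors N x" for x y
    using int[OF nbr(1)[OF that]] int[OF nbr(2)[OF that]] int[OF B(2)]
    unfolding pair_def by auto
  show ?thesis
    unfolding gen using pair_int pair_integral by (simp add: Bochner_Integration.integral_sum)
qed

section \<open>The mean-field solution\<close>

definition logistic :: "real \<Rightarrow> real \<Rightarrow> real \<Rightarrow> real" where
  "logistic p c t = p * exp (c * t) / (1 - p + p * exp (c * t))"

lemma logistic_denominator_pos:
  fixes p c t :: real
  assumes "0 \<le> p" "p \<le> 1"
  shows "0 < 1 - p + p * exp (c * t)"
proof (cases "p < 1")
  case True
  moreover have "0 \<le> p * exp (c * t)" using assms by simp
  ultimately show ?thesis by linarith
next
  case False
  then show ?thesis using assms by simp
qed

lemma logistic_bounds: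
  assumes "0 \<le> p" "p \<le> 1"
  shows "0 \<le> logistic p c t" "logistic p c t \<le> 1"
  using logistic_denominator_pos[OF assms, of c t] assms unfolding logistic_def
  by (simp_all add: divide_le_eq_1)

lemma logistic_at_0 [simp]: "logistic p c 0 = p"
  unfolding logistic_def by simp

lemma logistic_has_derivative:
  assumes "0 \<le> p" "p \<le> 1"
  shows "(logistic p c has_real_derivative c * logistic p c t * (1 - logistic p c t)) (at t within S)"
proof -
  define D where "D = 1 - p + p * exp (c * t)"
  have "0 < D"
    unfolding D_def using logistic_denominator_pos[OF assms] .
  have "(logistic p c has_real_derivative
      ((p * (exp (c * t) * c)) * D - p * exp (c * t) * (p * (exp (c * t) * c))) / (D * D)) (at t within S)"
    unfolding logistic_def[abs_def] D_def using \<open>0 < D\<close>[unfolded D_def]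
    by (auto intro!: derivative_eq_intros)
  also have "((p * (exp (c * t) * c)) * D - p * exp (c * t) * (p * (exp (c * t) * c))) / (D * D)
      = c * logistic p c t * (1 - logistic p c t)"
    unfolding logistic_def D_def[symmetric] using \<open>0 < D\<close> by (simp add: field_simps)
  finally show ?thesis .
qed

lemma logistic_power_has_derivative:
  assumes "0 \<le> p" "p \<le> 1"
  shows "((\<lambda>t. logistic p c t ^ k) has_real_derivative
    real k * c * logistic p c t ^ k * (1 - logistic p c t)) (at t within S)"
proof -
  have "((\<lambda>t. logistic p c t ^ k) has_real_derivative
      real k * (c * logistic p c t * (1 - logistic p c t) * logistic p c t ^ (k - Suc 0))) (at t within S)"
    by (rule DERIV_power[OF logistic_has_derivative[OF assms]])
  also have "real k * (c * logistic p c t * (1 - logistic p c t) * logistic p c t ^ (k - Suc 0))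
      = real k * c * logistic p c t ^ k * (1 - logistic p c t)"
    by (cases k) (auto simp: algebra_simps)
  finally show ?thesis .
qed

section \<open>Closing the correlation hierarchy of the bias voter model\<close>

lemma mean_field_pair_error:
  fixes I :: "'a set \<Rightarrow> real"
  assumes "0 \<le> lam" "0 \<le> th" "0 \<le> u" "u \<le> 1" "finite B" "x \<in> B"
    and err: "\<And>C. C \<in> {B, insert y (B - {x}), insert y B} \<Longrightarrow> \<bar>I C - u ^ card C\<bar> \<le> E"
  shows "\<bar>lam * (I (insert y (B - {x})) - I (insert y B)) - th * (I B - I (insert y B))
           - (lam - th) * u ^ card B * (1 - u)\<bar> \<le> 2 * (lam + th) * (E + of_bool (y \<in> B))"
proof -
  define C1 where "C1 = insert y (B - {x})"
  define C2 where "C2 = insert y B"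
  define G where "G C = I C - u ^ card C" for C
  define \<rho> where "\<rho> = lam * (u ^ card C1 - u ^ card C2) - th * (u ^ card B - u ^ card C2)
    - (lam - th) * u ^ card B * (1 - u)"
  have split: "lam * (I C1 - I C2) - th * (I B - I C2) - (lam - th) * u ^ card B * (1 - u)
      = lam * G C1 - lam * G C2 - th * G B + th * G C2 + \<rho>"
    unfolding G_def \<rho>_def by (simp add: algebra_simps)
  have "\<bar>G C\<bar> \<le> E" if "C \<in> {B, C1, C2}" for C
    using err that unfolding G_def C1_def C2_def by blast
  then have "lam * \<bar>G C1\<bar> \<le> lam * E" "lam * \<bar>G C2\<bar> \<le> lam * E" "th * \<bar>G B\<bar> \<le> th * E"
      "th * \<bar>G C2\<bar> \<le> th * E"
    using assms(1,2) by (simp_all add: mult_left_mono)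
  moreover have "\<bar>lam * G C1 - lam * G C2 - th * G B + th * G C2\<bar>
      \<le> \<bar>lam * G C1\<bar> + \<bar>lam * G C2\<bar> + \<bar>th * G B\<bar> + \<bar>th * G C2\<bar>"
    by arith
  moreover have "\<bar>lam * G C1\<bar> + \<bar>lam * G C2\<bar> + \<bar>th * G B\<bar> + \<bar>th * G C2\<bar>
      = lam * \<bar>G C1\<bar> + lam * \<bar>G C2\<bar> + th * \<bar>G B\<bar> + th * \<bar>G C2\<bar>"
    using assms(1,2) by (simp add: abs_mult)
  ultimately have G_terms: "\<bar>lam * G C1 - lam * G C2 - th * G B + th * G C2\<bar> \<le> 2 * (lam + th) * E"
    by (simp add: algebra_simps)
  have "card (B - {x}) + 1 = card B"
    using card_Suc_Diff1[OF assms(5,6)] by simp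
  have \<rho>_bound: "\<bar>\<rho>\<bar> \<le> 2 * (lam + th) * of_bool (y \<in> B)"
  proof (cases "y \<in> B")
    case False
    then have "card C1 = card B" "card C2 = card B + 1"
      using \<open>card (B - {x}) + 1 = card B\<close> assms(5) unfolding C1_def C2_def by simp_all
    then have "\<rho> = 0"
      unfolding \<rho>_def by (simp add: algebra_simps)
    then show ?thesis using assms(1,2) by simp
  next
    case True
    then have "card C1 \<le> card B" "C2 = B"
      using \<open>card (B - {x}) + 1 = card B\<close> assms(5) unfolding C1_def C2_def
      by (auto simp: card_insert_if insert_absorb)
    have powers: "0 \<le> u ^ card C1" "u ^ card C1 \<le> 1" "0 \<le> u ^ card B" "u ^ card B \<le> 1"
      using assms(3,4) by (simp_all add: power_le_one)
    then have "\<bar>u ^ card C1 - u ^ card B\<bar> \<le> 1"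
      unfolding abs_le_iff by linarith
    moreover have "\<bar>u ^ card B * (1 - u)\<bar> \<le> 1"
      using powers assms(3,4) by (simp add: abs_mult mult_le_one)
    ultimately have "\<bar>lam * (u ^ card C1 - u ^ card B)\<bar> \<le> lam" "\<bar>(lam - th) * (u ^ card B * (1 - u))\<bar> \<le> lam + th"
      using assms(1,2) by (auto simp: abs_mult intro: mult_left_le order_trans[OF mult_right_le_one_le])
    moreover have "\<rho> = lam * (u ^ card C1 - u ^ card B) - (lam - th) * (u ^ card B * (1 - u))"
      unfolding \<rho>_def \<open>C2 = B\<close> by (simp add: algebra_simps)
    ultimately show ?thesis
      using True assms(1,2) by simp
  qed
  have "\<bar>lam * (I C1 - I C2) - th * (I B - I C2) - (lam - th) * u ^ card B * (1 - u)\<bar>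
      \<le> 2 * (lam + th) * E + 2 * (lam + th) * of_bool (y \<in> B)"
    unfolding split using abs_triangle_ineq[of "lam * G C1 - lam * G C2 - th * G B + th * G C2" \<rho>]
      G_terms \<rho>_bound by linarith
  then show ?thesis
    unfolding C1_def C2_def by (simp add: distrib_left)
qed

lemma integral_bvm_gen_spin_prod_error:
  assumes M: "prob_space M" "sets M = sets (config_space N)"
    and "0 \<le> lam" "0 \<le> th" "0 \<le> u" "u \<le> 1"
    and B: "finite B" "B \<subseteq> tree_vertices N"
    and err: "\<And>C. finite C \<Longrightarrow> C \<subseteq> tree_vertices N \<Longrightarrow> card C \<le> card B + 1 \<Longrightarrow>
      \<bar>(\<integral>\<eta>. spin_prod C \<eta> \<partial>M) - u ^ card C\<bar> \<le> E"
  shows "\<bar>(\<integral>\<eta>. bvm_gen N lam th B (spin_prod B) \<eta> \<partial>M) - real (card B) * (lam - th) * u ^ card B * (1 - u)\<bar>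
    \<le> real (card B) * (2 * (lam + th)) * (E + 1 / real (N + 1) * real (card B))"
proof -
  define I where "I C = (\<integral>\<eta>. spin_prod C \<eta> \<partial>M)" for C
  define a where "a = 2 * (lam + th)"
  define c where "c = (lam - th) * u ^ card B * (1 - u)"
  define T where "T x y = (lam * (I (insert y (B - {x})) - I (insert y B)) - th * (I B - I (insert y B)) - c)
    / real (N + 1)" for x y
  have x_in: "x \<in> tree_vertices N" if "x \<in> B" for x
    using that B by auto
  have "(\<Sum>y\<in>tree_neighbors N x. c / real (N + 1)) = c" if "x \<in> B" for x
    using card_tree_neighbors[OF x_in[OF that]] by simp
  then have "real (card B) * c = (\<Sum>x\<in>B. \<Sum>y\<in>tree_neighbors N x. c / real (N + 1))"
    by simp
  then have decomp: "(\<integral>\<eta>. bvm_gen N lam th B (spin_prod B) \<eta> \<partial>M) - real (card B) * c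
      = (\<Sum>x\<in>B. \<Sum>y\<in>tree_neighbors N x. T x y)"
    unfolding integral_bvm_gen_spin_prod[OF M B] T_def I_def
    by (simp add: sum_subtractf diff_divide_distrib)
  have T_bound: "\<bar>T x y\<bar> \<le> a * (E + of_bool (y \<in> B)) / real (N + 1)"
    if "x \<in> B" "y \<in> tree_neighbors N x" for x y
  proof -
    have "y \<in> tree_vertices N"
      using tree_neighbors_subset[OF x_in] that by blast
    then have "\<bar>I C - u ^ card C\<bar> \<le> E" if "C \<in> {B, insert y (B - {x}), insert y B}" for C
      unfolding I_def using that B \<open>x \<in> B\<close>
      by (intro err) (auto simp: card_insert_if card_Diff1_le le_SucI)
    then show ?thesis
      unfolding T_def c_def a_def abs_divide
      using mean_field_pair_error[OF assms(3-6) B(1) \<open>x \<in> B\<close>] by (simp add: divide_right_mono)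
  qed
  have "\<bar>\<Sum>x\<in>B. \<Sum>y\<in>tree_neighbors N x. T x y\<bar>
      \<le> (\<Sum>x\<in>B. \<Sum>y\<in>tree_neighbors N x. a * (E + of_bool (y \<in> B)) / real (N + 1))"
    using T_bound by (intro order_trans[OF sum_abs sum_mono] order_trans[OF sum_abs sum_mono]) auto
  also have "\<dots> = (\<Sum>x\<in>B. a * E + a * real (card (tree_neighbors N x \<inter> B)) / real (N + 1))"
    using card_tree_neighbors[OF x_in] finite_tree_neighbors[OF x_in]
    by (intro sum.cong refl)
      (simp add: sum_divide_distrib[symmetric] sum_distrib_left distrib_left sum.distrib, simp add: field_simps)
  also have "\<dots> \<le> (\<Sum>x\<in>B. a * E + a * real (card B) / real (N + 1))"
    using B(1) \<open>0 \<le> lam\<close> \<open>0 \<le> th\<close>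
    by (intro sum_mono add_left_mono divide_right_mono mult_left_mono) (auto simp: a_def card_mono)
  also have "\<dots> = real (card B) * a * (E + 1 / real (N + 1) * real (card B))"
    by (simp add: algebra_simps)
  finally show ?thesis
    using decomp unfolding a_def c_def by simp
qed

definition mean_field_error ::
    "real \<Rightarrow> real \<Rightarrow> real \<Rightarrow> (real \<Rightarrow> (nat list \<Rightarrow> bool) measure) \<Rightarrow> nat list set \<Rightarrow> real \<Rightarrow> real" where
  "mean_field_error lam th p \<nu> B t = (\<integral>\<eta>. spin_prod B \<eta> \<partial>\<nu> t) - logistic p (lam - th) t ^ card B"

definition mean_field_error_deriv ::
    "nat \<Rightarrow> real \<Rightarrow> real \<Rightarrow> real \<Rightarrow> (real \<Rightarrow> (nat list \<Rightarrow> bool) measure) \<Rightarrow> nat list set \<Rightarrow> real \<Rightarrow> real" where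
  "mean_field_error_deriv N lam th p \<nu> B t =
     (\<integral>\<eta>. bvm_gen N lam th B (spin_prod B) \<eta> \<partial>\<nu> t)
     - real (card B) * (lam - th) * logistic p (lam - th) t ^ card B * (1 - logistic p (lam - th) t)"

lemma bvm_correlation_hierarchy:
  assumes "0 \<le> th" "0 \<le> lam" "0 \<le> p" "p \<le> 1" and marg: "bvm_marginals N lam th p \<nu>"
  shows "correlation_hierarchy (2 * (lam + th)) (1 / real (N + 1)) {B. finite B \<and> B \<subseteq> tree_vertices N}
    (mean_field_error lam th p \<nu>) (mean_field_error_deriv N lam th p \<nu>)"
proof
  fix B and t :: real
  assume B: "B \<in> {B. finite B \<and> B \<subseteq> tree_vertices N}" and "0 \<le> t"
  have \<nu>: "prob_space (\<nu> t)" "sets (\<nu> t) = sets (config_space N)"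
    using marg \<open>0 \<le> t\<close> unfolding bvm_marginals_def by auto
  have L: "0 \<le> logistic p (lam - th) t" "logistic p (lam - th) t \<le> 1"
    using logistic_bounds[OF assms(3,4)] by auto
  show "\<bar>mean_field_error lam th p \<nu> B t\<bar> \<le> 1"
    using integral_spin_prod_bounds[OF \<nu>, of B] B zero_le_power[OF L(1), of "card B"]
      power_le_one[OF L, of "card B"]
    unfolding mean_field_error_def abs_le_iff by simp
  show "(mean_field_error lam th p \<nu> B has_real_derivative mean_field_error_deriv N lam th p \<nu> B t)
      (at t within {0..})"
    using marg B \<open>0 \<le> t\<close> cylinder_fun_spin_prod[of B N]
    unfolding mean_field_error_def[abs_def] mean_field_error_deriv_def bvm_marginals_def
    by (auto intro!: DERIV_diff logistic_power_has_derivative assms(3,4))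
  fix M assume "\<And>B'. B' \<in> {B. finite B \<and> B \<subseteq> tree_vertices N} \<Longrightarrow> card B' \<le> card B + 1 \<Longrightarrow>
      \<bar>mean_field_error lam th p \<nu> B' t\<bar> \<le> M"
  then show "\<bar>mean_field_error_deriv N lam th p \<nu> B t\<bar>
      \<le> real (card B) * (2 * (lam + th)) * (M + 1 / real (N + 1) * real (card B))"
    unfolding mean_field_error_deriv_def using B
    by (intro integral_bvm_gen_spin_prod_error[OF \<nu> assms(2,1) L]) (auto simp: mean_field_error_def)
qed (use assms in auto)

lemma mean_field_error_initial:
  assumes "0 \<le> p" "p \<le> 1" "bvm_marginals N lam th p \<nu>" "finite B" "B \<subseteq> tree_vertices N"
  shows "mean_field_error lam th p \<nu> B 0 = 0"
  using assms integral_spin_prod_mu_p[of p B N]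
  unfolding mean_field_error_def bvm_marginals_def by simp

lemma bvm_spin_expectation_tendsto_logistic:
  assumes "0 \<le> th" "0 \<le> lam" "0 \<le> p" "p \<le> 1" "0 \<le> t"
    and marg: "\<forall>\<^sub>F N in sequentially. bvm_marginals N lam th p (\<nu> N)"
  shows "(\<lambda>N. \<integral>\<eta>. spin_prod {x} \<eta> \<partial>\<nu> N t) \<longlonglongrightarrow> logistic p (lam - th) t"
proof -
  define Bs where "Bs N = {B. finite B \<and> B \<subseteq> tree_vertices N}" for N
  define err where "err N = mean_field_error lam th p (\<nu> N)" for N
  have "uniformly_vanishing (\<lambda>N B. err N B t) Bs"
  proof (rule correlation_hierarchy_vanishes)
    show "\<forall>\<^sub>F N in sequentially. correlation_hierarchy (2 * (lam + th)) (1 / real (N + 1)) (Bs N)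
        (err N) (mean_field_error_deriv N lam th p (\<nu> N))"
      using marg by eventually_elim (use assms bvm_correlation_hierarchy in \<open>simp add: Bs_def err_def\<close>)
    show "(\<lambda>N. 1 / real (N + 1)) \<longlonglongrightarrow> 0"
      using LIMSEQ_inverse_real_of_nat by (simp add: inverse_eq_divide)
    show "\<forall>\<^sub>F N in sequentially. \<forall>B\<in>Bs N. err N B 0 = 0"
      using marg by eventually_elim (use assms mean_field_error_initial in \<open>auto simp: Bs_def err_def\<close>)
  qed (use assms in auto)
  moreover have "\<forall>\<^sub>F N in sequentially. {x} \<in> Bs N"
    using eventually_in_tree_vertices by (simp add: Bs_def)
  ultimately have "(\<lambda>N. err N {x} t) \<longlonglongrightarrow> 0"
    by (rule uniformly_vanishing_imp_tendsto)
  then have "(\<lambda>N. (\<integral>\<eta>. spin_prod {x} \<eta> \<partial>\<nu> N t) - logistic p (lam - th) t) \<longlonglongrightarrow> 0"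
    by (simp add: err_def mean_field_error_def)
  then show ?thesis
    by (rule LIM_zero_cancel)
qed

theorem theorem2p1:
  fixes lam th p t :: real and \<nu> :: "nat \<Rightarrow> real \<Rightarrow> (nat list \<Rightarrow> bool) measure"
    and x :: "nat list"
  assumes "0 < th" and "th < lam" and "0 < p" and "p < 1"
    and "\<forall>N\<ge>1. bvm_marginals N lam th p (\<nu> N)"
    and "0 < t"
  shows "(\<lambda>N. measure (\<nu> N t) {\<eta> \<in> space (\<nu> N t). \<eta> x = True})
           \<longlonglongrightarrow> p * exp ((lam - th) * t) / (1 - p + p * exp ((lam - th) * t))"
proof -
  have marg: "\<forall>\<^sub>F N in sequentially. bvm_marginals N lam th p (\<nu> N)"
    using assms(5) unfolding eventually_sequentially by blast
  have "(\<lambda>N. \<integral>\<eta>. spin_prod {x} \<eta> \<partial>\<nu> N t) \<longlonglongrightarrow> logistic p (lam - th) t"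
    using assms marg by (intro bvm_spin_expectation_tendsto_logistic) auto
  moreover have "\<forall>\<^sub>F N in sequentially.
      (\<integral>\<eta>. spin_prod {x} \<eta> \<partial>\<nu> N t) = measure (\<nu> N t) {\<eta> \<in> space (\<nu> N t). \<eta> x = True}"
    using marg eventually_in_tree_vertices[of x]
  proof eventually_elim
    case (elim N)
    then have "sets (\<nu> N t) = sets (config_space N)"
      using \<open>0 < t\<close> unfolding bvm_marginals_def by simp
    from measure_spin_eq_integral_spin_prod[OF this elim(2)] show ?case ..
  qed
  ultimately show ?thesis
    unfolding logistic_def by (rule Lim_transform_eventually)
qed

end
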